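(* Let $n\ge0$, $r\in\mathcal{Y}_n$ and $\mathsf{R}\subseteq[n]$, regarded as a set of internal nodes of $r$ via the in-order labeling. Then $\lambda(\pi_{\mathsf{R}})\le r$ in the Tamari order if and only if $\mathsf{R}$ is admissible.
   Context: Permutations in one-line notation; $\mathrm{st}$ standardizes sequences of distinct integers. For $\mathsf{R}=\{R_1<\dots<R_p\}\subseteq[n]$ with complement $\{R^c_1<\dots<R^c_q\}$, $\pi_{\mathsf{R}}\in\mathfrak{S}_n$ is defined by $\pi_{\mathsf{R}}^{-1}=(R_1,..,R_p,R^c_1,..,R^c_q)$ in one-line notation. Trees: $\mathcal{Y}_n$ = rooted planar binary trees with $n$ internal nodes, $\mathcal{Y}_0=\{|\}$; $s\vee t$ = root with left subtree $s$, right subtree $t$. Tamari order: generated by replacing a subtree $(a\vee b)\vee c$ by the larger $a\vee(b\vee c)$. $\lambda(\mathrm{id}_0)=|$, $\lambda(\sigma)=\lambda(\mathrm{st}(\sigma(1..j-1)))\vee\lambda(\mathrm{st}(\sigma(j+1..n)))$ where $j=\sigma^{-1}(n)$. In-order labeling of the internal nodes of $r\in\mathcal{Y}_n$ by $1,\dots,n$: if $r=s\vee t$ with $s\in\mathcal{Y}_{j-1}$, the root gets label $j$, nodes of $s$ keep their labels in $s$, and nodes of $t$ get their labels in $t$ increased by $j$. A set $\mathsf{R}$ of internal nodes is admissible if for each $x\in\mathsf{R}$ the left child of $x$ (if internal) and all its internal descendants lie in $\mathsf{R}$. *)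

theory Defs
  imports Main
begin

datatype btree = Leaf | Node btree btree

fun nodes :: "btree \<Rightarrow> nat" where
  "nodes Leaf = 0"
| "nodes (Node s t) = nodes s + nodes t + 1"

inductive tamari_step :: "btree \<Rightarrow> btree \<Rightarrow> bool" where
  rot: "tamari_step (Node (Node a b) c) (Node a (Node b c))"
| left: "tamari_step s s' \<Longrightarrow> tamari_step (Node s t) (Node s' t)"
| right: "tamari_step t t' \<Longrightarrow> tamari_step (Node s t) (Node s t')"

definition tamari_le :: "btree \<Rightarrow> btree \<Rightarrow> bool" where
  "tamari_le = tamari_step\<^sup>*\<^sup>*"

fun idx :: "nat list \<Rightarrow> nat \<Rightarrow> nat" where
  "idx [] x = 0"
| "idx (y # ys) x = (if y = x then 0 else Suc (idx ys x))"

definition st :: "nat list \<Rightarrow> nat list" where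
  "st xs = map (\<lambda>x. card {y \<in> set xs. y \<le> x}) xs"

lemma length_st[simp]: "length (st xs) = length xs"
  by (simp add: st_def)

function lam :: "nat list \<Rightarrow> btree" where
  "lam xs = (if xs = [] then Leaf else
     (let j = idx xs (Max (set xs)) in
       Node (lam (st (take j xs))) (lam (st (drop (Suc j) xs)))))"
  by pat_completeness auto
termination
proof (relation "measure length")
  fix xs :: "nat list" and j
  assume "xs \<noteq> []" "j = idx xs (Max (set xs))"
  have "idx xs (Max (set xs)) < length xs" using \<open>xs \<noteq> []\<close>
  proof (induction xs)
    case Nil then show ?case by simp
  next
    case (Cons y ys) then show ?case
      by (cases "ys = []") auto
  qed
  then show "(st (take j xs), xs) \<in> measure length"
    "(st (drop (Suc j) xs), xs) \<in> measure length"
    using \<open>j = _\<close> \<open>xs \<noteq> []\<close> by auto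
qed auto

declare lam.simps[simp del]

text \<open>pi_R in one-line notation: its inverse in one-line notation is R (sorted) followed by
  the complement of R in [n] (sorted); so pi_R(k) = 1 + position of k in that list.\<close>
definition piR :: "nat \<Rightarrow> nat set \<Rightarrow> nat list" where
  "piR n R = (let L = sorted_list_of_set R @ sorted_list_of_set ({1..n} - R)
              in map (\<lambda>k. Suc (idx L k)) [1..<Suc n])"

text \<open>In-order labelling: leftdesc r x = labels of the internal nodes in the left subtree
  of the internal node labelled x (i.e. the left child, if internal, and all its internal
  descendants).\<close>
fun leftdesc :: "btree \<Rightarrow> nat \<Rightarrow> nat set" where
  "leftdesc Leaf x = {}"
| "leftdesc (Node s t) x =
     (if x = Suc (nodes s) then {1..nodes s}
      else if x \<le> nodes s then leftdesc s x
      else (\<lambda>y. y + Suc (nodes s)) ` leftdesc t (x - Suc (nodes s)))"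

definition admissible :: "btree \<Rightarrow> nat set \<Rightarrow> bool" where
  "admissible r R \<longleftrightarrow> (\<forall>x\<in>R. leftdesc r x \<subseteq> R)"

end

theory Submission
  imports Defs
begin

(* Encode R by its word of marks bs (position i is marked iff i \<in> R). In \<pi>_R the marked
   positions carry the values 1, ..., |R| increasingly and the unmarked ones the remaining values
   increasingly, so the maximum sits at the last unmarked position and the entries after it
   increase. Hence \<lambda>(\<pi>_R) depends only on bs: it is min_tree bs, whose root is the last
   unmarked position and whose right subtree is a left comb.
   Admissibility is preserved by rotations and holds for min_tree bs itself, which gives one
   direction. Conversely, if R is admissible for r = s \<or> t, cut bs at the root of r: when the root
   is marked, so is everything to its left, and a sequence of rotations moves min_tree bs below
   min_tree (left part) \<or> min_tree (right part); induction on r finishes the proof. *)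

lemma tamari_le_refl [simp]: "tamari_le t t"
  by (simp add: tamari_le_def)

lemma tamari_le_trans [trans]: "tamari_le s t \<Longrightarrow> tamari_le t u \<Longrightarrow> tamari_le s u"
  unfolding tamari_le_def by (rule rtranclp_trans)

lemma tamari_le_rotate: "tamari_le (Node (Node a b) c) (Node a (Node b c))"
  unfolding tamari_le_def by (intro r_into_rtranclp tamari_step.rot)

lemma tamari_le_Node:
  assumes "tamari_le s s'" and "tamari_le t t'"
  shows "tamari_le (Node s t) (Node s' t')"
proof -
  have "tamari_le (Node s t) (Node s' t)"
    using assms(1) unfolding tamari_le_def
    by (induction rule: rtranclp_induct) (auto intro: rtranclp.rtrancl_into_rtrancl tamari_step.left)
  also have "tamari_le (Node s' t) (Node s' t')"
    using assms(2) unfolding tamari_le_def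
    by (induction rule: rtranclp_induct) (auto intro: rtranclp.rtrancl_into_rtrancl tamari_step.right)
  finally show ?thesis .
qed

lemma tamari_step_nodes: "tamari_step t r \<Longrightarrow> nodes r = nodes t"
  by (induction rule: tamari_step.induct) auto

fun left_comb :: "nat \<Rightarrow> btree" where
  "left_comb 0 = Leaf"
| "left_comb (Suc h) = Node (left_comb h) Leaf"

lemma nodes_left_comb [simp]: "nodes (left_comb h) = h"
  by (induction h) auto

lemma left_comb_le_Node: "tamari_le (left_comb (Suc (k + h))) (Node (left_comb k) (left_comb h))"
proof (induction h)
  case (Suc h)
  have "tamari_le (left_comb (Suc (k + Suc h))) (Node (Node (left_comb k) (left_comb h)) Leaf)"
    using Suc by (simp add: tamari_le_Node)
  also have "tamari_le \<dots> (Node (left_comb k) (left_comb (Suc h)))"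
    by (simp add: tamari_le_rotate)
  finally show ?case .
qed simp

(* min_tree_rev reads the marks from right to left; h counts the marks seen since the last
   unmarked position. *)
fun min_tree_rev :: "nat \<Rightarrow> bool list \<Rightarrow> btree" where
  "min_tree_rev h [] = left_comb h"
| "min_tree_rev h (True # bs) = min_tree_rev (Suc h) bs"
| "min_tree_rev h (False # bs) = Node (min_tree_rev 0 bs) (left_comb h)"

definition min_tree :: "bool list \<Rightarrow> btree" where
  "min_tree bs = min_tree_rev 0 (rev bs)"

lemma min_tree_rev_replicate: "min_tree_rev h (replicate k True @ bs) = min_tree_rev (h + k) bs"
  by (induction k arbitrary: h) auto

lemma min_tree_replicate [simp]: "min_tree (replicate h True) = left_comb h"
  using min_tree_rev_replicate[of 0 h "[]"] by (simp add: min_tree_def)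

lemma min_tree_unmarked [simp]:
  "min_tree (xs @ False # replicate h True) = Node (min_tree xs) (left_comb h)"
  using min_tree_rev_replicate[of 0 h "False # rev xs"] by (simp add: min_tree_def)

lemma marks_induct [case_names marked unmarked]:
  assumes marked: "\<And>h. P (replicate h True)"
    and unmarked: "\<And>xs h. P xs \<Longrightarrow> P (xs @ False # replicate h True)"
  shows "P bs"
proof (induction "length bs" arbitrary: bs rule: less_induct)
  case less
  show ?case
  proof (cases "False \<in> set bs")
    case True
    then obtain xs ys where bs: "bs = xs @ False # ys" and "False \<notin> set ys"
      using split_list_last by metis
    then have "ys = replicate (length ys) True"
      by (metis (full_types) replicate_length_same)
    moreover have "length xs < length bs"
      using bs by simp
    ultimately show ?thesis
      using bs less unmarked by metis
  next
    case False
    then have "bs = replicate (length bs) True"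
      by (metis (full_types) replicate_length_same)
    then show ?thesis by (metis marked)
  qed
qed

lemma min_tree_Nil [simp]: "min_tree [] = Leaf"
  by (simp add: min_tree_def)

lemma nodes_min_tree [simp]: "nodes (min_tree bs) = length bs"
  by (induction bs rule: marks_induct) auto

lemma min_tree_split:
  assumes "b \<Longrightarrow> (\<forall>x\<in>set xs. x) \<and> h = 0"
  shows "min_tree (xs @ b # replicate h True) = Node (min_tree xs) (left_comb h)"
proof (cases b)
  case True
  with assms obtain k where "xs = replicate k True" and "h = 0"
    by (metis (full_types) replicate_length_same)
  with True show ?thesis
    using min_tree_replicate[of "Suc k"] by (simp add: replicate_append_same)
qed simp

lemma min_tree_le_Node:
  assumes "b \<longrightarrow> (\<forall>x\<in>set xs. x)"
  shows "tamari_le (min_tree (xs @ b # ys)) (Node (min_tree xs) (min_tree ys))"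
proof (induction ys rule: marks_induct)
  case (marked h)
  show ?case
  proof (cases b)
    case True
    with assms obtain k where "xs = replicate k True"
      by (metis (full_types) replicate_length_same)
    with True show ?thesis
      using left_comb_le_Node[of k h] min_tree_replicate[of "Suc (k + h)"]
      by (simp add: replicate_app_Cons_same replicate_add)
  qed simp
next
  case (unmarked zs h)
  have "min_tree (xs @ b # zs @ False # replicate h True) = Node (min_tree (xs @ b # zs)) (left_comb h)"
    using min_tree_unmarked[of "xs @ b # zs" h] by simp
  also have "tamari_le \<dots> (Node (Node (min_tree xs) (min_tree zs)) (left_comb h))"
    using unmarked by (simp add: tamari_le_Node)
  also have "tamari_le \<dots> (Node (min_tree xs) (min_tree (zs @ False # replicate h True)))"
    by (simp add: tamari_le_rotate)
  finally show ?case .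
qed

lemma leftdesc_subset: "leftdesc r x \<subseteq> {1..nodes r}"
  by (induction r arbitrary: x) (fastforce split: if_splits)+

lemma leftdesc_outside: "x \<notin> {1..nodes r} \<Longrightarrow> leftdesc r x = {}"
proof (induction r arbitrary: x)
  case (Node s t)
  have "x - Suc (nodes s) \<notin> {1..nodes t}" if "Suc (nodes s) < x"
    using that Node.prems by auto
  then show ?case using Node by auto
qed simp

lemma admissible_cong:
  assumes "R \<inter> {1..nodes r} = S \<inter> {1..nodes r}"
  shows "admissible r R \<longleftrightarrow> admissible r S"
proof -
  have "admissible r R \<longleftrightarrow> admissible r (R \<inter> {1..nodes r})" for R
    using leftdesc_subset[of r] leftdesc_outside[of _ r] unfolding admissible_def by blast
  then show ?thesis using assms by metis
qed

lemma admissible_Node: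
  "admissible (Node s t) R \<longleftrightarrow>
     admissible s R \<and> (Suc (nodes s) \<in> R \<longrightarrow> {1..nodes s} \<subseteq> R) \<and>
     admissible t {y. Suc (nodes s) + y \<in> R}"
proof -
  define k where "k = nodes s"
  have below: "leftdesc (Node s t) x = leftdesc s x" if "x \<le> k" for x
    using that by (simp add: k_def)
  have above: "leftdesc (Node s t) (Suc k + x) = (+) (Suc k) ` leftdesc t x" if "0 < x" for x
    using that by (auto simp: k_def add.commute)
  have root: "leftdesc (Node s t) (Suc k) = {1..k}"
    by (simp add: k_def)
  have shift: "(+) (Suc k) ` A \<subseteq> R \<longleftrightarrow> A \<subseteq> {y. Suc k + y \<in> R}" for A
    by auto
  show ?thesis
    unfolding k_def[symmetric]
  proof
    assume "admissible (Node s t) R"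
    then have adm: "leftdesc (Node s t) x \<subseteq> R" if "x \<in> R" for x
      using that by (simp add: admissible_def)
    have "leftdesc s x \<subseteq> R" if "x \<in> R" for x
    proof (cases "x \<le> k")
      case True
      then show ?thesis using adm[OF that] below by simp
    qed (simp add: leftdesc_outside k_def)
    moreover have "Suc k \<in> R \<longrightarrow> {1..k} \<subseteq> R"
      using adm root by metis
    moreover have "leftdesc t x \<subseteq> {y. Suc k + y \<in> R}" if "Suc k + x \<in> R" for x
    proof (cases "x = 0")
      case False
      then show ?thesis using adm[OF that] above[of x] shift by simp
    qed (simp add: leftdesc_outside)
    ultimately show "admissible s R \<and> (Suc k \<in> R \<longrightarrow> {1..k} \<subseteq> R) \<and> admissible t {y. Suc k + y \<in> R}"
      by (simp add: admissible_def)
  next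
    assume adm: "admissible s R \<and> (Suc k \<in> R \<longrightarrow> {1..k} \<subseteq> R) \<and> admissible t {y. Suc k + y \<in> R}"
    have "leftdesc (Node s t) x \<subseteq> R" if "x \<in> R" for x
    proof (cases x "Suc k" rule: linorder_cases)
      case less
      then show ?thesis using adm that below[of x] by (simp add: admissible_def del: leftdesc.simps)
    next
      case equal
      then show ?thesis using adm that root by (simp del: leftdesc.simps)
    next
      case greater
      then obtain x' where x': "x = Suc k + x'" "0 < x'"
        using less_imp_Suc_add by fastforce
      then have "leftdesc t x' \<subseteq> {y. Suc k + y \<in> R}"
        using adm that by (simp add: admissible_def)
      then show ?thesis using above[OF x'(2)] shift x'(1) by (simp del: leftdesc.simps)
    qed
    then show "admissible (Node s t) R"
      by (simp add: admissible_def)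
  qed
qed

lemma admissible_tamari_step: "tamari_step t r \<Longrightarrow> admissible t R \<Longrightarrow> admissible r R"
proof (induction arbitrary: R rule: tamari_step.induct)
  case (rot a b c)
  then show ?case
    by (auto simp: admissible_Node ac_simps)
next
  case (left s s' t)
  then show ?case
    using tamari_step_nodes by (simp add: admissible_Node)
qed (simp add: admissible_Node)

lemma admissible_tamari_le: "tamari_le t r \<Longrightarrow> admissible t R \<Longrightarrow> admissible r R"
  unfolding tamari_le_def
  by (induction rule: rtranclp_induct) (auto intro: admissible_tamari_step)

definition marked :: "bool list \<Rightarrow> nat set" where
  "marked bs = {i \<in> {1..length bs}. bs ! (i - 1)}"

lemma marked_take: "marked (take k bs) = marked bs \<inter> {1..k}"
  by (auto simp: marked_def)

lemma marked_drop: "marked (drop k bs) = {y. 0 < y \<and> k + y \<in> marked bs}"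
  by (auto simp: marked_def add.commute)

lemma admissible_Leaf [simp]: "admissible Leaf R"
  by (simp add: admissible_def)

lemma admissible_left_comb: "{1..h} \<subseteq> R \<Longrightarrow> admissible (left_comb h) R"
proof (induction h)
  case (Suc h)
  then have "{1..h} \<subseteq> R" by auto
  with Suc show ?case by (simp add: admissible_Node)
qed simp

lemma admissible_min_tree: "admissible (min_tree bs) (marked bs)"
proof (induction bs rule: marks_induct)
  case (marked h)
  have "marked (replicate h True) = {1..h}"
    by (auto simp: marked_def)
  then show ?case by (simp add: admissible_left_comb)
next
  case (unmarked xs h)
  define bs where "bs = xs @ False # replicate h True"
  have "marked xs = marked bs \<inter> {1..length xs}"
    using marked_take[of "length xs" bs] by (simp add: bs_def)
  then have "admissible (min_tree xs) (marked bs)"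
    using unmarked admissible_cong[of "marked xs" "min_tree xs" "marked bs"] by simp
  moreover have "Suc (length xs) \<notin> marked bs"
    by (simp add: marked_def bs_def)
  moreover have "{1..h} \<subseteq> {y. Suc (length xs) + y \<in> marked bs}"
    by (auto simp: marked_def bs_def nth_append)
  ultimately show ?case
    by (simp add: bs_def admissible_Node admissible_left_comb)
qed

lemma min_tree_le:
  assumes "length bs = nodes r" and "admissible r (marked bs)"
  shows "tamari_le (min_tree bs) r"
  using assms
proof (induction r arbitrary: bs)
  case (Node s t)
  define k where "k = nodes s"
  have k: "k < length bs"
    using Node.prems(1) by (simp add: k_def)
  have adm_s: "admissible s (marked bs)"
    and adm_root: "Suc k \<in> marked bs \<longrightarrow> {1..k} \<subseteq> marked bs"
    and adm_t: "admissible t {y. Suc k + y \<in> marked bs}"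
    using Node.prems(2) by (simp_all add: admissible_Node k_def)
  have split: "take k bs @ bs ! k # drop (Suc k) bs = bs"
    using k by (simp flip: id_take_nth_drop)
  have root: "\<forall>x\<in>set (take k bs). x" if "bs ! k"
  proof -
    have "{1..k} \<subseteq> marked bs"
      using adm_root k that by (simp add: marked_def)
    then have "bs ! i" if "i < k" for i
      using that subsetD[of "{1..k}" "marked bs" "Suc i"] by (simp add: marked_def)
    then show ?thesis by (auto simp: in_set_conv_nth)
  qed
  have "tamari_le (min_tree bs) (Node (min_tree (take k bs)) (min_tree (drop (Suc k) bs)))"
    using min_tree_le_Node[of "bs ! k" "take k bs" "drop (Suc k) bs"] root
    unfolding split by blast
  also have "tamari_le \<dots> (Node s t)"
  proof (intro tamari_le_Node Node.IH)
    show "admissible s (marked (take k bs))"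
      using adm_s admissible_cong[of "marked (take k bs)" s "marked bs"] by (simp add: marked_take k_def)
    have "marked (drop (Suc k) bs) \<inter> {1..nodes t} = {y. Suc k + y \<in> marked bs} \<inter> {1..nodes t}"
      by (auto simp: marked_drop)
    then show "admissible t (marked (drop (Suc k) bs))"
      using adm_t admissible_cong by blast
  qed (use Node.prems(1) in \<open>simp_all add: k_def\<close>)
  finally show ?case .
qed simp

theorem min_tree_le_iff:
  assumes "length bs = nodes r"
  shows "tamari_le (min_tree bs) r \<longleftrightarrow> admissible r (marked bs)"
  using min_tree_le[OF assms] admissible_min_tree admissible_tamari_le by blast

lemma idx_less_length: "x \<in> set xs \<Longrightarrow> idx xs x < length xs"
  by (induction xs) auto

lemma nth_idx: "x \<in> set xs \<Longrightarrow> xs ! idx xs x = x"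
  by (induction xs) auto

lemma strict_mono_on_card_le:
  fixes A :: "'a::linorder set"
  assumes "finite A"
  shows "strict_mono_on A (\<lambda>x. card {y \<in> A. y \<le> x})"
proof (rule strict_mono_onI)
  fix a b assume "a \<in> A" "b \<in> A" "a < b"
  then have "{y \<in> A. y \<le> a} \<subseteq> {y \<in> A. y \<le> b}" and "b \<in> {y \<in> A. y \<le> b} - {y \<in> A. y \<le> a}"
    by auto
  then have "{y \<in> A. y \<le> a} \<subset> {y \<in> A. y \<le> b}"
    by blast
  then show "card {y \<in> A. y \<le> a} < card {y \<in> A. y \<le> b}"
    using assms by (simp add: psubset_card_mono)
qed

lemma st_nth_less_iff:
  assumes "i < length xs" and "j < length xs"
  shows "st xs ! i < st xs ! j \<longleftrightarrow> xs ! i < xs ! j"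
  using assms strict_mono_on_less[OF strict_mono_on_card_le[of "set xs"]]
  by (simp add: st_def)

lemma distinct_st: "distinct xs \<Longrightarrow> distinct (st xs)"
  using strict_mono_on_imp_inj_on[OF strict_mono_on_card_le[of "set xs"]]
  by (simp add: st_def distinct_map)

(* The relative order of the entries of \<pi>_R: marked entries increase, unmarked entries
   increase, and every marked entry is smaller than every unmarked one. *)
definition marks_pattern :: "nat list \<Rightarrow> bool list \<Rightarrow> bool" where
  "marks_pattern xs bs \<longleftrightarrow> length xs = length bs \<and> distinct xs \<and>
     (\<forall>i j. i < j \<longrightarrow> j < length xs \<longrightarrow> (xs ! i < xs ! j \<longleftrightarrow> (bs ! j \<longrightarrow> bs ! i)))"

lemma marks_pattern_st: "marks_pattern xs bs \<Longrightarrow> marks_pattern (st xs) bs"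
  by (simp add: marks_pattern_def distinct_st st_nth_less_iff)

lemma marks_pattern_take: "marks_pattern xs bs \<Longrightarrow> marks_pattern (take k xs) (take k bs)"
  by (auto simp: marks_pattern_def)

lemma marks_pattern_drop: "marks_pattern xs bs \<Longrightarrow> marks_pattern (drop k xs) (drop k bs)"
  by (auto simp: marks_pattern_def)

lemma min_tree_split_at_max:
  assumes pattern: "marks_pattern xs bs" and j: "j < length xs"
    and max: "\<And>i. i < length xs \<Longrightarrow> i \<noteq> j \<Longrightarrow> xs ! i < xs ! j"
  shows "min_tree bs = Node (min_tree (take j bs)) (min_tree (drop (Suc j) bs))"
proof -
  define n where "n = length xs"
  have len: "length bs = n" and order: "\<And>i k. i < k \<Longrightarrow> k < n \<Longrightarrow> xs ! i < xs ! k \<longleftrightarrow> (bs ! k \<longrightarrow> bs ! i)"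
    using pattern by (auto simp: marks_pattern_def n_def)
  have "bs ! i" if "j < i" "i < n" for i
    using order[of j i] max[of i] that by (auto simp: n_def)
  then have after: "drop (Suc j) bs = replicate (n - Suc j) True"
    using len by (auto simp: list_eq_iff_nth_eq)
  have root: "(\<forall>x\<in>set (take j bs). x) \<and> n - Suc j = 0" if "bs ! j"
  proof -
    have "bs ! i" if "i < j" for i
      using order[of i j] max[of i] \<open>bs ! j\<close> that j by (simp add: n_def)
    moreover have "\<not> Suc j < n"
      using order[of j "Suc j"] max[of "Suc j"] \<open>bs ! j\<close> by (auto simp: n_def)
    ultimately show ?thesis by (auto simp: in_set_conv_nth)
  qed
  have "bs = take j bs @ bs ! j # replicate (n - Suc j) True"
    using id_take_nth_drop[of j bs] after j len by (simp add: n_def)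
  then have "min_tree bs = Node (min_tree (take j bs)) (left_comb (n - Suc j))"
    using min_tree_split[of "bs ! j" "take j bs" "n - Suc j"] root by metis
  then show ?thesis
    using after by simp
qed

lemma lam_marks_pattern: "marks_pattern xs bs \<Longrightarrow> lam xs = min_tree bs"
proof (induction "length xs" arbitrary: xs bs rule: less_induct)
  case less
  show ?case
  proof (cases "xs = []")
    case True
    with less.prems show ?thesis by (simp add: marks_pattern_def lam.simps)
  next
    case False
    define j where "j = idx xs (Max (set xs))"
    have j: "j < length xs" and "xs ! j = Max (set xs)"
      using False by (simp_all add: j_def idx_less_length nth_idx)
    moreover have "distinct xs"
      using less.prems by (simp add: marks_pattern_def)
    ultimately have max: "xs ! i < xs ! j" if "i < length xs" "i \<noteq> j" for i
      using that by (metis Max_ge List.finite_set nth_eq_iff_index_eq nth_mem order_le_neq_trans)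
    have "lam xs = Node (lam (st (take j xs))) (lam (st (drop (Suc j) xs)))"
      using False by (subst lam.simps) (simp add: j_def Let_def)
    also have "\<dots> = Node (min_tree (take j bs)) (min_tree (drop (Suc j) bs))"
      using less j by (simp add: marks_pattern_st marks_pattern_take marks_pattern_drop)
    also have "\<dots> = min_tree bs"
      using min_tree_split_at_max[OF less.prems j max] by simp
    finally show ?thesis .
  qed
qed

lemma idx_append_in: "x \<in> set ys \<Longrightarrow> idx (ys @ zs) x = idx ys x"
  by (induction ys) auto

lemma idx_append_notin: "x \<notin> set ys \<Longrightarrow> idx (ys @ zs) x = length ys + idx zs x"
  by (induction ys) auto

lemma idx_less_iff_sorted:
  assumes "sorted_wrt (<) ys" and "a \<in> set ys" and "b \<in> set ys"
  shows "idx ys a < idx ys b \<longleftrightarrow> a < b"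
proof -
  have "strict_mono_on {..<length ys} ((!) ys)"
    using assms(1) by (intro strict_mono_onI) (simp add: sorted_wrt_nth_less)
  then show ?thesis
    using strict_mono_on_less[of _ "(!) ys" "idx ys a" "idx ys b"] assms(2,3)
    by (simp add: idx_less_length nth_idx)
qed

lemma idx_append_less_iff_sorted:
  assumes "sorted_wrt (<) ys" and "sorted_wrt (<) zs"
    and "a \<in> set ys \<union> set zs" and "b \<in> set ys \<union> set zs" and "a < b"
  shows "idx (ys @ zs) a < idx (ys @ zs) b \<longleftrightarrow> (b \<in> set ys \<longrightarrow> a \<in> set ys)"
  using assms idx_less_length[of a ys] idx_less_length[of b ys]
    idx_less_iff_sorted[of ys a b] idx_less_iff_sorted[of zs a b]
  by (cases "a \<in> set ys"; cases "b \<in> set ys") (auto simp: idx_append_in idx_append_notin)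

definition marks :: "nat \<Rightarrow> nat set \<Rightarrow> bool list" where
  "marks n R = map (\<lambda>i. i \<in> R) [1..<Suc n]"

lemma length_marks [simp]: "length (marks n R) = n"
  by (simp add: marks_def)

lemma marked_marks: "marked (marks n R) = R \<inter> {1..n}"
  by (auto simp: marked_def marks_def simp del: upt_Suc)

lemma marks_pattern_piR:
  assumes "R \<subseteq> {1..n}"
  shows "marks_pattern (piR n R) (marks n R)"
proof -
  define L where "L = sorted_list_of_set R @ sorted_list_of_set ({1..n} - R)"
  have "finite R"
    using assms finite_subset by blast
  then have set_L: "set L = {1..n}"
    using assms by (auto simp: L_def)
  have piR: "piR n R = map (\<lambda>k. Suc (idx L k)) [1..<Suc n]"
    by (simp add: piR_def L_def Let_def)
  have "inj_on (\<lambda>k. Suc (idx L k)) {1..n}"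
    using set_L by (intro inj_onI) (metis nat.inject nth_idx)
  moreover have "Suc (idx L a) < Suc (idx L b) \<longleftrightarrow> (b \<in> R \<longrightarrow> a \<in> R)"
    if "a \<in> {1..n}" and "b \<in> {1..n}" and "a < b" for a b
    using that idx_append_less_iff_sorted[of "sorted_list_of_set R" "sorted_list_of_set ({1..n} - R)" a b]
      \<open>finite R\<close> set_L by (simp add: L_def)
  ultimately show ?thesis
    by (auto simp: marks_pattern_def piR marks_def distinct_map atLeastLessThanSuc_atLeastAtMost
        simp del: upt_Suc)
qed

theorem lemma8p8:
  fixes n :: nat and r :: btree and R :: "nat set"
  assumes "nodes r = n" and "R \<subseteq> {1..n}"
  shows "tamari_le (lam (piR n R)) r \<longleftrightarrow> admissible r R"
proof -
  have "lam (piR n R) = min_tree (marks n R)"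
    using assms(2) by (intro lam_marks_pattern marks_pattern_piR)
  moreover have "marked (marks n R) = R"
    using assms(2) by (auto simp: marked_marks)
  ultimately show ?thesis
    using min_tree_le_iff[of "marks n R" r] assms(1) by simp
qed

end
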